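(* Let $p(\cdot)\in\mathcal{P}^{\log}_{0}(\mathbb{R}^{3})$ with $2\leq p^{-}\leq p(\cdot)\leq p^{+}\leq 6$, and $1\leq\rho\leq\infty$. Then there exists a positive constant $C$ such that for any $f\in\mathcal{L}^{1}(0,\infty;F\dot{B}^{1-\frac{3}{p(\cdot)}}_{p(\cdot),1}(\mathbb{R}^{3}))\cap\mathcal{L}^{1}(0,\infty;F\dot{B}^{-\frac{1}{2}}_{2,1}(\mathbb{R}^{3}))$, \[ \Big\|\int_{0}^{t}e^{(t-\tau)\Delta}f\,d\tau\Big\|_{\mathcal{Y}_{t}}\leq C\Big(\|f\|_{\mathcal{L}^{1}_{t}(F\dot{B}^{1-\frac{3}{p(\cdot)}}_{p(\cdot),1})}+\|f\|_{\mathcal{L}^{1}_{t}(F\dot{B}^{-\frac{1}{2}}_{2,1})}\Big). \]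
   Context: $e^{t\Delta}$ is the Fourier multiplier $e^{-t|\xi|^2}$. Fourier transform: $\widehat f(\xi)=(2\pi)^{-3/2}\int f(x)e^{-ix\cdot\xi}dx$. Let $\chi$ be a smooth radial non-increasing function supported in $B(0,\frac43)$ with $\chi\equiv1$ on $B(0,\frac34)$; $\varphi(\xi)=\chi(\xi/2)-\chi(\xi)$, $\varphi_j(\xi)=\varphi(2^{-j}\xi)$, $S_jf=\mathcal{F}^{-1}(\chi(2^{-j}\cdot)\widehat f)$; $\mathcal{S}'_h$ is the set of tempered distributions with $S_jf\to0$ as $j\to-\infty$. Constant exponents: $\|f\|_{F\dot B^s_{p,1}}=\sum_j2^{js}\|\varphi_j\widehat f\|_{L^p}$ and $\|f\|_{\mathcal{L}^\lambda_t(F\dot B^s_{p,1})}=\sum_j2^{js}\|\varphi_j\widehat f\|_{L^\lambda(0,\infty;L^p_\xi)}$. Variable exponents: $\mathcal{P}_0$ is the set of measurable $p:\mathbb{R}^3\to[1,\infty)$ with $1<p^-:=\operatorname{ess\,inf}p$, $p^+:=\operatorname{ess\,sup}p<\infty$; $\|f\|_{L^{p(\cdot)}}=\inf\{\lambda>0:\int|f/\lambda|^{p(x)}dx\le1\}$; $\mathcal{P}_0^{\log}$ is the set of $p\in\mathcal{P}_0$ such that $1/p_\infty=\lim_{|x|\to\infty}1/p(x)$ exists and for some $C$, $|1/p(x)-1/p(y)|\le C/\log(e+1/|x-y|)$ and $|1/p(x)-1/p_\infty|\le C/\log(e+|x|)$. For a function $s(\cdot)$: $\|f\|_{F\dot B^{s(\cdot)}_{p(\cdot),1}}=\sum_j\|2^{js(\cdot)}\varphi_j\widehat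 f\|_{L^{p(\cdot)}}$ and $\|f\|_{\mathcal{L}^\rho_t(F\dot B^{s(\cdot)}_{p(\cdot),1})}=\sum_j\|2^{js(\cdot)}\varphi_j\widehat f\|_{L^\rho(0,\infty;L^{p(\cdot)}_\xi)}$, with $2^{js(\cdot)}$ the function $\xi\mapsto 2^{js(\xi)}$. The space $\mathcal{Y}_t=\mathcal{L}^{\rho}(0,\infty;F\dot{B}^{1-\frac{3}{p(\cdot)}+\frac{2}{\rho}}_{p(\cdot),1})\cap\mathcal{L}^{1}(0,\infty;F\dot{B}^{\frac{3}{2}}_{2,1})\cap\mathcal{L}^{\infty}(0,\infty;F\dot{B}^{-\frac{1}{2}}_{2,1})$ with norm $\|u\|_{\mathcal{Y}_t}=\max\{\|u\|_{\mathcal{L}^\rho_t(F\dot B^{1-\frac{3}{p(\cdot)}+\frac2\rho}_{p(\cdot),1})},\|u\|_{\mathcal{L}^1_t(F\dot B^{\frac32}_{2,1})},\|u\|_{\mathcal{L}^\infty_t(F\dot B^{-\frac12}_{2,1})}\}$. *)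

theory Defs
  imports "HOL-Analysis.Analysis"
begin

type_synonym R3 = "real^3"

primrec Ck :: "nat \<Rightarrow> (R3 \<Rightarrow> real) set" where
  "Ck 0 = {f. continuous_on UNIV f}"
| "Ck (Suc k) = {f. continuous_on UNIV f \<and>
      (\<forall>i::3. \<exists>g \<in> Ck k. \<forall>x.
         ((\<lambda>h. f (x + h *\<^sub>R axis i 1)) has_real_derivative g x) (at 0))}"

definition smooth_fun :: "(R3 \<Rightarrow> real) \<Rightarrow> bool" where
  "smooth_fun f \<longleftrightarrow> (\<forall>k. f \<in> Ck k)"

definition admissible_chi :: "(R3 \<Rightarrow> real) \<Rightarrow> bool" where
  "admissible_chi chi \<longleftrightarrow>
     smooth_fun chi
   \<and> (\<forall>x y. norm x = norm y \<longrightarrow> chi x = chi y)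
   \<and> (\<forall>x y. norm x \<le> norm y \<longrightarrow> chi y \<le> chi x)
   \<and> closure {x. chi x \<noteq> 0} \<subseteq> ball 0 (4/3)
   \<and> (\<forall>x \<in> ball 0 (3/4). chi x = 1)"

definition phi :: "(R3 \<Rightarrow> real) \<Rightarrow> R3 \<Rightarrow> real" where
  "phi chi \<xi> = chi ((1/2) *\<^sub>R \<xi>) - chi \<xi>"

definition phij :: "(R3 \<Rightarrow> real) \<Rightarrow> int \<Rightarrow> R3 \<Rightarrow> real" where
  "phij chi j \<xi> = phi chi ((2 powr (- real_of_int j)) *\<^sub>R \<xi>)"

text \<open>p in P_0^log(R^3); p^- > 1 and p^+ < infinity are written out as essential bounds.\<close>
definition P0_log :: "(R3 \<Rightarrow> real) \<Rightarrow> bool" where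
  "P0_log p \<longleftrightarrow>
     p \<in> borel_measurable lborel
   \<and> (\<forall>x. 1 \<le> p x)
   \<and> (\<exists>c>1. AE x in lborel. c \<le> p x)
   \<and> (\<exists>c. AE x in lborel. p x \<le> c)
   \<and> (\<exists>q. ((\<lambda>x. 1 / p x) \<longlongrightarrow> q) at_infinity \<and>
        (\<exists>C. (\<forall>x y. \<bar>1 / p x - 1 / p y\<bar> \<le> C / ln (exp 1 + 1 / norm (x - y)))
           \<and> (\<forall>x. \<bar>1 / p x - q\<bar> \<le> C / ln (exp 1 + norm x))))"

definition enn_rpow :: "ennreal \<Rightarrow> real \<Rightarrow> ennreal" where
  "enn_rpow a r = (if a = top then top else ennreal (enn2real a powr r))"

definition lux_norm :: "(R3 \<Rightarrow> real) \<Rightarrow> (R3 \<Rightarrow> complex) \<Rightarrow> ennreal" where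
  "lux_norm p g = Inf {ennreal lam | lam. lam > 0 \<and>
       (\<integral>\<^sup>+ x. ennreal ((cmod (g x) / lam) powr p x) \<partial>lborel) \<le> 1}"

definition Lq_norm :: "real \<Rightarrow> (R3 \<Rightarrow> complex) \<Rightarrow> ennreal" where
  "Lq_norm q g = enn_rpow (\<integral>\<^sup>+ x. ennreal (cmod (g x) powr q) \<partial>lborel) (1 / q)"

definition time_norm :: "ennreal \<Rightarrow> (real \<Rightarrow> ennreal) \<Rightarrow> ennreal" where
  "time_norm \<rho> N = (if \<rho> = top then Inf {c. AE t in lborel. t > 0 \<longrightarrow> N t \<le> c}
      else enn_rpow (\<integral>\<^sup>+ t \<in> {0<..}. enn_rpow (N t) (enn2real \<rho>) \<partial>lborel) (1 / enn2real \<rho>))"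

text \<open>Functions are represented by their Fourier transforms F t xi = (f(t))^(xi).
  Chemin-Lerner norm L^rho_t(F B^{s(.)}_{p(.),1}) (variable exponents).\<close>
definition CL_var :: "(R3 \<Rightarrow> real) \<Rightarrow> ennreal \<Rightarrow> (R3 \<Rightarrow> real) \<Rightarrow> (R3 \<Rightarrow> real)
    \<Rightarrow> (real \<Rightarrow> R3 \<Rightarrow> complex) \<Rightarrow> ennreal" where
  "CL_var chi \<rho> p s F = (\<integral>\<^sup>+ j. time_norm \<rho> (\<lambda>t. lux_norm p
      (\<lambda>\<xi>. complex_of_real (2 powr (real_of_int j * s \<xi>) * phij chi j \<xi>) * F t \<xi>))
      \<partial>count_space (UNIV :: int set))"

definition CL_const :: "(R3 \<Rightarrow> real) \<Rightarrow> ennreal \<Rightarrow> real \<Rightarrow> real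
    \<Rightarrow> (real \<Rightarrow> R3 \<Rightarrow> complex) \<Rightarrow> ennreal" where
  "CL_const chi \<rho> q s F = (\<integral>\<^sup>+ j. ennreal (2 powr (real_of_int j * s)) *
      time_norm \<rho> (\<lambda>t. Lq_norm q (\<lambda>\<xi>. complex_of_real (phij chi j \<xi>) * F t \<xi>))
      \<partial>count_space (UNIV :: int set))"

definition duhamel :: "(real \<Rightarrow> R3 \<Rightarrow> complex) \<Rightarrow> real \<Rightarrow> R3 \<Rightarrow> complex" where
  "duhamel F t \<xi> = (LINT \<tau>:{0..t}|lborel.
      complex_of_real (exp (- (t - \<tau>) * (norm \<xi>)\<^sup>2)) * F \<tau> \<xi>)"

definition two_over :: "ennreal \<Rightarrow> real" where
  "two_over \<rho> = (if \<rho> = top then 0 else 2 / enn2real \<rho>)"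

definition Y_norm :: "(R3 \<Rightarrow> real) \<Rightarrow> (R3 \<Rightarrow> real) \<Rightarrow> ennreal
    \<Rightarrow> (real \<Rightarrow> R3 \<Rightarrow> complex) \<Rightarrow> ennreal" where
  "Y_norm chi p \<rho> U = max (CL_var chi \<rho> p (\<lambda>\<xi>. 1 - 3 / p \<xi> + two_over \<rho>) U)
      (max (CL_const chi 1 2 (3/2) U) (CL_const chi top 2 (-1/2) U))"

end

theory Submission
  imports Defs "HOL-Real_Asymp.Real_Asymp"
begin

text \<open>
  The estimate holds block by block in frequency. On the support of \<open>phij chi j\<close> one has
  \<open>|\<xi>|^2 \<ge> a = (3/4 * 2^j)^2\<close>, so the heat multiplier \<open>exp (-(t - \<tau>) |\<xi>|^2)\<close> of the
  Duhamel integral is dominated by \<open>exp (-(t - \<tau>) a)\<close>. Minkowski's integral inequality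
  for the Luxemburg norm, derived from Jensen's inequality, moves the \<open>L^p(.)\<close> norm in \<open>\<xi>\<close>
  inside the \<open>\<tau>\<close>-integral. The same inequality in time, with constant exponent \<open>\<rho>\<close>, is
  Young's inequality for this kernel, whose \<open>L^\<rho>\<close> norm is at most \<open>a^(-1/\<rho>)\<close>. This loss
  cancels the gain \<open>2^(2j/\<rho>)\<close> in regularity up to the factor \<open>(16/9)^(1/\<rho>) \<le> 16/9\<close>, so
  \<open>C = 2\<close> works.
\<close>

lemma enn_rpow_ennreal: "0 \<le> x \<Longrightarrow> enn_rpow (ennreal x) r = ennreal (x powr r)"
  by (simp add: enn_rpow_def)

lemma enn_rpow_top [simp]: "enn_rpow top r = top"
  by (simp add: enn_rpow_def)

lemma enn_rpow_zero [simp]: "enn_rpow 0 r = 0"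
  by (simp add: enn_rpow_def)

lemma enn_rpow_one [simp]: "enn_rpow a 1 = a"
  by (cases a rule: ennreal_cases) (simp_all add: enn_rpow_def)

lemma enn_rpow_mono:
  assumes "0 \<le> r" "a \<le> b"
  shows "enn_rpow a r \<le> enn_rpow b r"
proof (cases b rule: ennreal_cases)
  case (real y)
  then obtain x where "a = ennreal x" "0 \<le> x" "x \<le> y"
    using assms by (cases a rule: ennreal_cases) (auto simp: top_unique)
  then show ?thesis using real assms by (simp add: enn_rpow_def powr_mono2)
qed (simp add: top_unique)

lemma enn_rpow_le_iff:
  assumes "0 < q" "0 \<le> l"
  shows "enn_rpow a (1 / q) \<le> ennreal l \<longleftrightarrow> a \<le> ennreal (l powr q)"
proof (cases a rule: ennreal_cases)
  case (real x)
  have "x powr (1 / q) \<le> l \<longleftrightarrow> x \<le> l powr q"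
    using assms real powr_mono2[of q "x powr (1 / q)" l] powr_mono2[of "1 / q" x "l powr q"]
    by (auto simp: powr_powr)
  then show ?thesis using real assms by (simp add: enn_rpow_ennreal)
qed (simp add: top_unique)

lemma enn_rpow_divide:
  assumes "0 < r" "0 < c"
  shows "enn_rpow (a / ennreal c) r = enn_rpow a r / ennreal (c powr r)"
proof (cases a rule: ennreal_cases)
  case (real x)
  then show ?thesis
    using assms by (simp add: divide_ennreal enn_rpow_ennreal powr_divide)
qed (use assms in \<open>simp add: ennreal_top_divide\<close>)

lemma measurable_enn_rpow [measurable]:
  assumes [measurable]: "f \<in> borel_measurable M" "g \<in> borel_measurable M"
  shows "(\<lambda>x. enn_rpow (f x) (g x)) \<in> borel_measurable M"
  unfolding enn_rpow_def by measurable

lemma rpow_tangent_line: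
  fixes P x y :: real
  assumes P: "1 \<le> P" and "0 \<le> x" "0 \<le> y"
  shows "P * y powr (P - 1) * x \<le> x powr P + (P - 1) * y powr P"
proof (cases "y = 0 \<or> P = 1")
  case False
  then have "0 < y" "1 < P" using assms by auto
  define q where "q = P / (P - 1)"
  have "1 < q" "1 / P + 1 / q = 1" using \<open>1 < P\<close> by (auto simp: q_def field_simps)
  then have "x * y powr (P - 1) \<le> x powr P / P + (y powr (P - 1)) powr q / q"
    using Youngs_inequality \<open>1 < P\<close> assms by simp
  also have "(y powr (P - 1)) powr q = y powr P"
    using \<open>1 < P\<close> \<open>0 < y\<close> by (simp add: powr_powr q_def)
  finally show ?thesis
    using \<open>1 < P\<close> by (simp add: q_def field_simps)
qed (use assms in auto)

lemma enn_rpow_tangent_line: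
  assumes "1 \<le> P" "0 \<le> y"
  shows "ennreal (P * y powr (P - 1)) * u \<le> enn_rpow u P + ennreal ((P - 1) * y powr P)"
proof (cases u rule: ennreal_cases)
  case (real x)
  then show ?thesis
    using rpow_tangent_line[OF assms(1) real(1) assms(2)] assms
    by (simp add: enn_rpow_ennreal flip: ennreal_plus ennreal_mult)
qed simp

lemma enn_rpow_le_one_plus:
  assumes "1 \<le> P"
  shows "u \<le> 1 + enn_rpow u P"
proof (cases u rule: ennreal_cases)
  case (real x)
  have "x \<le> 1 + x powr P"
  proof (cases "x \<le> 1")
    case False
    then have "x powr 1 \<le> x powr P" using assms by (intro powr_mono) auto
    then show ?thesis using False by simp
  qed (use real in \<open>auto intro: add_increasing2\<close>)
  then have "ennreal x \<le> ennreal (1 + x powr P)"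
    by (rule ennreal_leI)
  then show ?thesis
    using real by (simp add: enn_rpow_ennreal)
qed simp

lemma jensen_enn_rpow:
  assumes P: "1 \<le> P" and [measurable]: "w \<in> borel_measurable M" "h \<in> borel_measurable M"
    and w: "(\<integral>\<^sup>+x. w x \<partial>M) \<le> 1"
  shows "enn_rpow (\<integral>\<^sup>+x. w x * h x \<partial>M) P \<le> (\<integral>\<^sup>+x. w x * enn_rpow (h x) P \<partial>M)"
    (is "enn_rpow ?I P \<le> ?R")
proof (cases ?I rule: ennreal_cases)
  case top
  have "?I \<le> (\<integral>\<^sup>+x. w x * (1 + enn_rpow (h x) P) \<partial>M)"
    by (intro nn_integral_mono mult_left_mono enn_rpow_le_one_plus P) auto
  also have "\<dots> = (\<integral>\<^sup>+x. w x \<partial>M) + ?R"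
    by (simp add: distrib_left nn_integral_add)
  also have "\<dots> \<le> 1 + ?R"
    using w by (rule add_right_mono)
  finally have "?R = top"
    using top by (auto simp: top_unique)
  then show ?thesis by simp
next
  case (real y)
  define c where "c = ennreal ((P - 1) * y powr P)"
  have "P * y powr (P - 1) * y = y powr P + (P - 1) * y powr P"
    using real(1) powr_mult_base[of y "P - 1"] by (simp add: algebra_simps)
  then have "ennreal (y powr P) + c = ennreal (P * y powr (P - 1)) * ?I"
    using P real by (simp add: c_def flip: ennreal_plus ennreal_mult)
  also have "\<dots> = (\<integral>\<^sup>+x. w x * (ennreal (P * y powr (P - 1)) * h x) \<partial>M)"
    by (simp add: nn_integral_cmult[symmetric] mult_ac)
  also have "\<dots> \<le> (\<integral>\<^sup>+x. w x * enn_rpow (h x) P + c * w x \<partial>M)"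
    using enn_rpow_tangent_line[OF P real(1)]
    by (intro nn_integral_mono) (simp add: c_def mult_left_mono mult.commute flip: distrib_left)
  also have "\<dots> = ?R + c * (\<integral>\<^sup>+x. w x \<partial>M)"
    by (simp add: nn_integral_add nn_integral_cmult)
  also have "\<dots> \<le> ?R + c"
    using mult_left_mono[OF w, of c] by (intro add_left_mono) simp
  finally have "ennreal (y powr P) \<le> ?R"
    by (simp add: c_def add.commute ennreal_add_left_cancel_le)
  then show ?thesis
    using real by (simp add: enn_rpow_ennreal)
qed

text \<open>
  The Luxemburg norm underlying \<open>lux_norm\<close>, generalised to \<open>ennreal\<close>-valued functions on an
  arbitrary measure space so that it also covers the constant-exponent norms in time.
\<close>

definition modular :: "'a measure \<Rightarrow> ('a \<Rightarrow> real) \<Rightarrow> ('a \<Rightarrow> ennreal) \<Rightarrow> ennreal" where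
  "modular M P f = (\<integral>\<^sup>+x. enn_rpow (f x) (P x) \<partial>M)"

definition luxemburg_norm :: "'a measure \<Rightarrow> ('a \<Rightarrow> real) \<Rightarrow> ('a \<Rightarrow> ennreal) \<Rightarrow> ennreal" where
  "luxemburg_norm M P f = Inf {ennreal l | l. 0 < l \<and> modular M P (\<lambda>x. f x / ennreal l) \<le> 1}"

lemma luxemburg_norm_le:
  "0 < l \<Longrightarrow> modular M P (\<lambda>x. f x / ennreal l) \<le> 1 \<Longrightarrow> luxemburg_norm M P f \<le> ennreal l"
  unfolding luxemburg_norm_def by (intro Inf_lower) auto

lemma modular_divide_antimono:
  assumes "0 < l" "l \<le> l'" "\<forall>x. 0 \<le> P x"
  shows "modular M P (\<lambda>x. f x / ennreal l') \<le> modular M P (\<lambda>x. f x / ennreal l)"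
proof -
  have "f x / ennreal l' \<le> f x / ennreal l" for x
    using assms by (cases "f x" rule: ennreal_cases)
      (auto simp: divide_ennreal divide_left_mono ennreal_leI ennreal_top_divide)
  then show ?thesis
    unfolding modular_def using assms by (intro nn_integral_mono enn_rpow_mono) auto
qed

lemma modular_le_one_if_luxemburg_norm_less:
  assumes "luxemburg_norm M P f < ennreal l" "\<forall>x. 0 \<le> P x"
  shows "modular M P (\<lambda>x. f x / ennreal l) \<le> 1"
proof -
  obtain l' where "0 < l'" "ennreal l' < ennreal l" "modular M P (\<lambda>x. f x / ennreal l') \<le> 1"
    using assms(1) unfolding luxemburg_norm_def Inf_less_iff by blast
  moreover from this have "l' \<le> l"
    using ennreal_less_iff[of l' l] by simp
  ultimately show ?thesis
    using modular_divide_antimono[of l' l P M f] assms(2) by simp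
qed

lemma luxemburg_norm_mono:
  assumes "\<And>x. f x \<le> g x" "\<forall>x. 0 \<le> P x"
  shows "luxemburg_norm M P f \<le> luxemburg_norm M P g"
  unfolding luxemburg_norm_def
proof (rule Inf_superset_mono, safe)
  fix l :: real assume "0 < l" "modular M P (\<lambda>x. g x / ennreal l) \<le> 1"
  moreover have "modular M P (\<lambda>x. f x / ennreal l) \<le> modular M P (\<lambda>x. g x / ennreal l)"
    unfolding modular_def using assms
    by (intro nn_integral_mono enn_rpow_mono divide_right_mono_ennreal) auto
  ultimately show "\<exists>l'. ennreal l = ennreal l' \<and> 0 < l' \<and> modular M P (\<lambda>x. f x / ennreal l') \<le> 1"
    by auto
qed

lemma luxemburg_norm_zero [simp]: "luxemburg_norm M P (\<lambda>x. 0) = 0"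
proof -
  have "luxemburg_norm M P (\<lambda>x. 0) \<le> 0 + ennreal e" if "0 < e" for e
    using luxemburg_norm_le[OF that, of M P "\<lambda>x. 0"] by (simp add: modular_def)
  then have "luxemburg_norm M P (\<lambda>x. 0) \<le> 0"
    by (rule ennreal_le_epsilon)
  then show ?thesis by simp
qed

lemma luxemburg_norm_cmult:
  assumes "0 \<le> c" "\<forall>x. 0 \<le> P x"
  shows "luxemburg_norm M P (\<lambda>x. ennreal c * f x) \<le> ennreal c * luxemburg_norm M P f"
    (is "?L \<le> _")
proof (cases "c = 0")
  case False
  then have "0 < c" using assms(1) by simp
  have "?L / ennreal c \<le> luxemburg_norm M P f"
    unfolding luxemburg_norm_def[of M P f]
  proof (rule Inf_greatest, safe)
    fix l :: real assume "0 < l" "modular M P (\<lambda>x. f x / ennreal l) \<le> 1"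
    moreover have "ennreal c * f x / ennreal (c * l) = f x / ennreal l" for x
      using \<open>0 < c\<close> \<open>0 < l\<close> divide_mult_eq[of "ennreal c" "f x" "ennreal l"]
      by (simp add: ennreal_mult mult.commute)
    ultimately have "?L \<le> ennreal c * ennreal l"
      using luxemburg_norm_le[of "c * l" M P "\<lambda>x. ennreal c * f x"] \<open>0 < c\<close>
      by (simp add: ennreal_mult)
    then show "?L / ennreal c \<le> ennreal l"
      using \<open>0 < c\<close> by (intro divide_le_posI_ennreal) auto
  qed
  then have "?L / ennreal c * ennreal c \<le> ennreal c * luxemburg_norm M P f"
    by (simp add: mult.commute mult_left_mono)
  then show ?thesis
    using \<open>0 < c\<close> by (simp add: ennreal_divide_times)
qed simp

lemma Inf_ennreal_pos_atLeast: "Inf {ennreal l | l. 0 < l \<and> c \<le> ennreal l} = c"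
proof (rule antisym)
  show "Inf {ennreal l | l. 0 < l \<and> c \<le> ennreal l} \<le> c"
  proof (rule ennreal_le_epsilon)
    fix e :: real assume "c < top" "0 < e"
    then obtain x where "c = ennreal x" "0 \<le> x"
      by (cases c rule: ennreal_cases) auto
    then show "Inf {ennreal l | l. 0 < l \<and> c \<le> ennreal l} \<le> c + ennreal e"
      using \<open>0 < e\<close> by (intro Inf_lower) (auto intro!: exI[of _ "x + e"] ennreal_leI)
  qed
qed (auto intro: Inf_greatest)

lemma luxemburg_norm_const_exponent:
  assumes "0 < q" and [measurable]: "f \<in> borel_measurable M"
  shows "luxemburg_norm M (\<lambda>_. q) f = enn_rpow (\<integral>\<^sup>+x. enn_rpow (f x) q \<partial>M) (1 / q)"
proof -
  define I where "I = (\<integral>\<^sup>+x. enn_rpow (f x) q \<partial>M)"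
  have "modular M (\<lambda>_. q) (\<lambda>x. f x / ennreal l) \<le> 1 \<longleftrightarrow> enn_rpow I (1 / q) \<le> ennreal l"
    if "0 < l" for l
  proof -
    have "modular M (\<lambda>_. q) (\<lambda>x. f x / ennreal l) = I / ennreal (l powr q)"
      using assms that by (simp add: modular_def I_def enn_rpow_divide nn_integral_divide)
    moreover have "I / ennreal (l powr q) \<le> 1 \<longleftrightarrow> I \<le> ennreal (l powr q)"
      using that by (cases I rule: ennreal_cases) (auto simp: divide_ennreal ennreal_top_divide top_unique)
    ultimately show ?thesis
      using that assms by (simp add: enn_rpow_le_iff)
  qed
  then have "luxemburg_norm M (\<lambda>_. q) f = Inf {ennreal l | l. 0 < l \<and> enn_rpow I (1 / q) \<le> ennreal l}"
    unfolding luxemburg_norm_def by (metis (no_types, lifting))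
  then show ?thesis
    by (simp add: Inf_ennreal_pos_atLeast I_def)
qed

lemma luxemburg_norm_INF_rat:
  assumes "\<forall>x. 0 \<le> P x"
  shows "luxemburg_norm M P f = (INF q\<in>{q::rat. 0 < q}.
      if modular M P (\<lambda>x. f x / ennreal (of_rat q)) \<le> 1 then ennreal (of_rat q) else top)"
    (is "_ = (INF q\<in>_. ?T q)")
proof (rule antisym)
  show "luxemburg_norm M P f \<le> (INF q\<in>{q. 0 < q}. ?T q)"
    by (rule INF_greatest) (auto intro: luxemburg_norm_le)
  show "(INF q\<in>{q. 0 < q}. ?T q) \<le> luxemburg_norm M P f"
    unfolding luxemburg_norm_def
  proof (rule Inf_greatest, safe)
    fix l :: real assume l: "0 < l" "modular M P (\<lambda>x. f x / ennreal l) \<le> 1"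
    show "(INF q\<in>{q. 0 < q}. ?T q) \<le> ennreal l"
    proof (rule ennreal_le_epsilon)
      fix e :: real assume "0 < e"
      then obtain q where q: "l < of_rat q" "of_rat q < l + e"
        using of_rat_dense[of l "l + e"] by auto
      then have "0 < q" using l by (metis of_rat_0 of_rat_less order_less_trans)
      moreover have "modular M P (\<lambda>x. f x / ennreal (of_rat q)) \<le> 1"
        using modular_divide_antimono[of l "of_rat q" P M f] l q assms by simp
      ultimately have "(INF q\<in>{q. 0 < q}. ?T q) \<le> ennreal (of_rat q)"
        by (intro INF_lower2[of q]) auto
      also have "\<dots> \<le> ennreal l + ennreal e"
        using q l \<open>0 < e\<close> by (simp flip: ennreal_plus add: ennreal_leI)
      finally show "(INF q\<in>{q. 0 < q}. ?T q) \<le> ennreal l + ennreal e" .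
    qed
  qed
qed

lemma borel_measurable_luxemburg_norm:
  assumes "sigma_finite_measure N" and [measurable]: "P \<in> borel_measurable N"
    and "\<forall>x. 0 \<le> P x" and [measurable]: "(\<lambda>(t, x). H t x) \<in> borel_measurable (M \<Otimes>\<^sub>M N)"
  shows "(\<lambda>t. luxemburg_norm N P (H t)) \<in> borel_measurable M"
proof -
  interpret N: sigma_finite_measure N by fact
  have "(\<lambda>t. INF q\<in>{q::rat. 0 < q}. if modular N P (\<lambda>x. H t x / ennreal (of_rat q)) \<le> 1
      then ennreal (of_rat q) else top) \<in> borel_measurable M"
  proof (rule borel_measurable_INF)
    show "countable {q::rat. 0 < q}" by simp
  qed (unfold modular_def, measurable)
  then show ?thesis
    by (simp add: luxemburg_norm_INF_rat[OF assms(3)])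
qed

lemma ennreal_weight_mult_divide:
  assumes "0 < b" "0 < L"
  shows "ennreal (b / L) * (u / ennreal b) = u / ennreal L"
proof (cases u rule: ennreal_cases)
  case (real x)
  then show ?thesis
    using assms by (simp add: divide_ennreal flip: ennreal_mult)
qed (use assms in \<open>simp add: ennreal_top_divide ennreal_mult_top\<close>)

text \<open>
  With the weights \<open>b t / L\<close>, the integral of \<open>H t\<close> divided by \<open>L\<close> is an average of the
  \<open>H t / b t\<close>, so Jensen's inequality and Fubini bound its modular by the average of
  their modulars.
\<close>

lemma luxemburg_norm_nn_integral_le_weights:
  assumes "sigma_finite_measure M" "sigma_finite_measure N"
    and [measurable]: "P \<in> borel_measurable N" and P: "\<forall>x. 1 \<le> P x"
    and [measurable]: "(\<lambda>(t, x). H t x) \<in> borel_measurable (M \<Otimes>\<^sub>M N)" "b \<in> borel_measurable M"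
    and b: "\<forall>t\<in>space M. 0 < b t"
    and Hb: "AE t in M. modular N P (\<lambda>x. H t x / ennreal (b t)) \<le> 1"
    and L: "0 < L" "(\<integral>\<^sup>+t. ennreal (b t) \<partial>M) \<le> ennreal L"
  shows "luxemburg_norm N P (\<lambda>x. \<integral>\<^sup>+t. H t x \<partial>M) \<le> ennreal L"
proof (rule luxemburg_norm_le[OF \<open>0 < L\<close>])
  interpret pair_sigma_finite M N using assms(1,2) by (simp add: pair_sigma_finite_def)
  define w where "w t = ennreal (b t / L)" for t
  define h where "h t x = H t x / ennreal (b t)" for t x
  have w: "(\<integral>\<^sup>+t. w t \<partial>M) \<le> 1"
  proof -
    have "(\<integral>\<^sup>+t. w t \<partial>M) = (\<integral>\<^sup>+t. ennreal (b t) / ennreal L \<partial>M)"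
      unfolding w_def using b \<open>0 < L\<close> by (intro nn_integral_cong) (auto simp: divide_ennreal)
    also have "\<dots> = (\<integral>\<^sup>+t. ennreal (b t) \<partial>M) / ennreal L"
      by (rule nn_integral_divide) measurable
    also have "\<dots> \<le> ennreal L / ennreal L"
      using L(2) by (rule divide_right_mono_ennreal)
    finally show ?thesis using \<open>0 < L\<close> by simp
  qed
  have "enn_rpow ((\<integral>\<^sup>+t. H t x \<partial>M) / ennreal L) (P x) \<le> (\<integral>\<^sup>+t. w t * enn_rpow (h t x) (P x) \<partial>M)"
    if "x \<in> space N" for x
  proof -
    have "(\<integral>\<^sup>+t. H t x \<partial>M) / ennreal L = (\<integral>\<^sup>+t. H t x / ennreal L \<partial>M)"
      using that by (intro nn_integral_divide[symmetric]) measurable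
    also have "\<dots> = (\<integral>\<^sup>+t. w t * h t x \<partial>M)"
      using b \<open>0 < L\<close> unfolding w_def h_def
      by (intro nn_integral_cong) (simp add: ennreal_weight_mult_divide)
    finally show ?thesis
      using P w that unfolding w_def h_def by (simp add: jensen_enn_rpow)
  qed
  then have "modular N P (\<lambda>x. (\<integral>\<^sup>+t. H t x \<partial>M) / ennreal L)
      \<le> (\<integral>\<^sup>+x. \<integral>\<^sup>+t. w t * enn_rpow (h t x) (P x) \<partial>M \<partial>N)"
    unfolding modular_def by (intro nn_integral_mono) auto
  also have "\<dots> = (\<integral>\<^sup>+t. \<integral>\<^sup>+x. w t * enn_rpow (h t x) (P x) \<partial>N \<partial>M)"
    unfolding w_def h_def by (rule Fubini') measurable
  also have "\<dots> = (\<integral>\<^sup>+t. w t * modular N P (h t) \<partial>M)"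
    unfolding modular_def w_def h_def by (intro nn_integral_cong nn_integral_cmult) measurable
  also have "\<dots> \<le> (\<integral>\<^sup>+t. w t \<partial>M)"
    using Hb unfolding h_def by (intro nn_integral_mono_AE) (auto elim!: eventually_mono intro: mult_left_le)
  finally show "modular N P (\<lambda>x. (\<integral>\<^sup>+t. H t x \<partial>M) / ennreal L) \<le> 1"
    using w by simp
qed

lemma (in sigma_finite_measure) positive_integrable_majorant:
  assumes [measurable]: "f \<in> borel_measurable M" and "integral\<^sup>N M f < top" "0 < e"
  obtains b where "b \<in> borel_measurable M" "\<forall>t\<in>space M. 0 < b t"
    "AE t in M. f t < ennreal (b t)" "(\<integral>\<^sup>+t. ennreal (b t) \<partial>M) \<le> integral\<^sup>N M f + ennreal e"
proof -
  obtain r where r: "integral\<^sup>N M f = ennreal r" "0 \<le> r"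
    using assms(2) by (cases "integral\<^sup>N M f" rule: ennreal_cases) auto
  obtain g where [measurable]: "g \<in> borel_measurable M" and "integral\<^sup>N M g \<noteq> top"
    and g: "\<forall>t\<in>space M. 0 < g t \<and> g t < top"
    using Ex_finite_integrable_function by auto
  then obtain G where G: "integral\<^sup>N M g = ennreal G" "0 \<le> G"
    by (cases "integral\<^sup>N M g" rule: ennreal_cases) auto
  define \<delta> where "\<delta> = e / (G + 1)"
  have "0 < \<delta>" "\<delta> * G \<le> e"
    using \<open>0 < e\<close> G by (auto simp: \<delta>_def field_simps)
  define b where "b t = enn2real (f t) + \<delta> * enn2real (g t)" for t
  have "(\<integral>\<^sup>+t. ennreal (b t) \<partial>M) \<le> (\<integral>\<^sup>+t. f t + ennreal \<delta> * g t \<partial>M)"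
    using g \<open>0 < \<delta>\<close>
    by (intro nn_integral_mono) (auto simp: b_def ennreal_mult ennreal_enn2real_if less_top)
  also have "\<dots> = ennreal (r + \<delta> * G)"
    using r G \<open>0 < \<delta>\<close> by (simp add: nn_integral_add nn_integral_cmult ennreal_mult)
  also have "\<dots> \<le> integral\<^sup>N M f + ennreal e"
    using r \<open>0 < e\<close> \<open>\<delta> * G \<le> e\<close> by (simp add: ennreal_leI flip: ennreal_plus)
  finally have "(\<integral>\<^sup>+t. ennreal (b t) \<partial>M) \<le> integral\<^sup>N M f + ennreal e" .
  moreover have "AE t in M. f t \<noteq> top"
    using assms by (intro nn_integral_PInf_AE[unfolded infinity_ennreal_def]) auto
  then have "AE t in M. f t < ennreal (b t)"
    using AE_space
  proof eventually_elim
    case (elim t)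
    then have "0 < \<delta> * enn2real (g t)"
      using g \<open>0 < \<delta>\<close> by (simp add: enn2real_positive_iff)
    with elim show ?case
      by (cases "f t" rule: ennreal_cases) (auto simp: b_def ennreal_lessI)
  qed
  moreover have "\<forall>t\<in>space M. 0 < b t"
    using g \<open>0 < \<delta>\<close> by (auto simp: b_def enn2real_positive_iff intro: add_nonneg_pos)
  moreover have "b \<in> borel_measurable M"
    unfolding b_def by measurable
  ultimately show ?thesis
    using that by blast
qed

theorem luxemburg_norm_nn_integral_le:
  assumes "sigma_finite_measure M" "sigma_finite_measure N"
    and [measurable]: "P \<in> borel_measurable N" and P: "\<forall>x. 1 \<le> P x"
    and [measurable]: "(\<lambda>(t, x). H t x) \<in> borel_measurable (M \<Otimes>\<^sub>M N)"
  shows "luxemburg_norm N P (\<lambda>x. \<integral>\<^sup>+t. H t x \<partial>M) \<le> (\<integral>\<^sup>+t. luxemburg_norm N P (H t) \<partial>M)"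
    (is "_ \<le> ?R")
proof (rule ennreal_le_epsilon)
  fix e :: real assume "?R < top" "0 < e"
  interpret M: sigma_finite_measure M by fact
  have P0: "\<forall>x. 0 \<le> P x" using P by (auto intro: order_trans[OF zero_le_one])
  have Lm: "(\<lambda>t. luxemburg_norm N P (H t)) \<in> borel_measurable M"
    by (rule borel_measurable_luxemburg_norm[OF assms(2,3) P0 assms(5)])
  obtain r where r: "?R = ennreal r" "0 \<le> r"
    using \<open>?R < top\<close> by (cases ?R rule: ennreal_cases) auto
  obtain b where [measurable]: "b \<in> borel_measurable M" and b: "\<forall>t\<in>space M. 0 < b t"
    and less: "AE t in M. luxemburg_norm N P (H t) < ennreal (b t)"
    and int: "(\<integral>\<^sup>+t. ennreal (b t) \<partial>M) \<le> ?R + ennreal e"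
    by (rule M.positive_integrable_majorant[OF Lm \<open>?R < top\<close> \<open>0 < e\<close>])
  from less have "AE t in M. modular N P (\<lambda>x. H t x / ennreal (b t)) \<le> 1"
    by eventually_elim (simp add: modular_le_one_if_luxemburg_norm_less P0)
  moreover have "(\<integral>\<^sup>+t. ennreal (b t) \<partial>M) \<le> ennreal (r + e)"
    using int r \<open>0 < e\<close> by simp
  ultimately have "luxemburg_norm N P (\<lambda>x. \<integral>\<^sup>+t. H t x \<partial>M) \<le> ennreal (r + e)"
    using \<open>0 < e\<close> r by (intro luxemburg_norm_nn_integral_le_weights[OF assms(1-3) P assms(5) _ b]) auto
  then show "luxemburg_norm N P (\<lambda>x. \<integral>\<^sup>+t. H t x \<partial>M) \<le> ?R + ennreal e"
    using r \<open>0 < e\<close> by simp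
qed

text \<open>
  Dominates \<open>exp (-(t - \<tau>) |\<xi>|^2)\<close> on frequencies with \<open>|\<xi>|^2 \<ge> a\<close>; the condition
  \<open>0 < \<tau> \<le> t\<close> is the range of the Duhamel integral.
\<close>

definition decay_kernel :: "real \<Rightarrow> real \<Rightarrow> real \<Rightarrow> ennreal" where
  "decay_kernel a t \<tau> = (if 0 < \<tau> \<and> \<tau> \<le> t then ennreal (exp (- (t - \<tau>) * a)) else 0)"

lemma borel_measurable_decay_kernel [measurable]:
  "(\<lambda>(t, \<tau>). decay_kernel a t \<tau>) \<in> borel_measurable (lborel \<Otimes>\<^sub>M lborel)"
  unfolding decay_kernel_def by measurable

lemma decay_kernel_le_indicator: "0 \<le> a \<Longrightarrow> decay_kernel a t \<tau> \<le> indicator {0<..} \<tau>"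
  by (auto simp: decay_kernel_def mult_nonpos_nonneg)

lemma nn_integral_exp_decay:
  assumes "0 < c"
  shows "(\<integral>\<^sup>+t. ennreal (exp (- (t - \<tau>) * c)) * indicator {\<tau>..} t \<partial>lborel) = ennreal (1 / c)"
proof -
  define F where "F t = - exp (- (t - \<tau>) * c) / c" for t
  have "(\<integral>\<^sup>+t. ennreal (exp (- (t - \<tau>) * c)) * indicator {\<tau>..} t \<partial>lborel) = ennreal (0 - F \<tau>)"
  proof (rule nn_integral_FTC_atLeast)
    show "DERIV F t :> exp (- (t - \<tau>) * c)" for t
      using assms unfolding F_def by (auto intro!: derivative_eq_intros)
    show "(F \<longlongrightarrow> 0) at_top"
      using assms unfolding F_def by real_asymp
  qed auto
  then show ?thesis by (simp add: F_def)
qed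

lemma luxemburg_norm_decay_kernel_le:
  assumes "0 < a" "1 \<le> q"
  shows "luxemburg_norm lborel (\<lambda>_. q) (\<lambda>t. decay_kernel a t \<tau>) \<le> ennreal (a powr (- 1 / q)) * indicator {0<..} \<tau>"
proof (cases "0 < \<tau>")
  case True
  have "enn_rpow (decay_kernel a t \<tau>) q = ennreal (exp (- (t - \<tau>) * (a * q))) * indicator {\<tau>..} t" for t
    using True by (auto simp: decay_kernel_def enn_rpow_ennreal exp_powr_real mult_ac)
  moreover have "0 < a * q" using assms by simp
  moreover have "luxemburg_norm lborel (\<lambda>_. q) (\<lambda>t. decay_kernel a t \<tau>)
      = enn_rpow (\<integral>\<^sup>+t. enn_rpow (decay_kernel a t \<tau>) q \<partial>lborel) (1 / q)"
    using assms by (intro luxemburg_norm_const_exponent) (simp, measurable)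
  ultimately have "luxemburg_norm lborel (\<lambda>_. q) (\<lambda>t. decay_kernel a t \<tau>) = enn_rpow (ennreal (1 / (a * q))) (1 / q)"
    by (simp only: nn_integral_exp_decay)
  also have "\<dots> = ennreal ((1 / (a * q)) powr (1 / q))"
    using assms by (simp add: enn_rpow_ennreal)
  also have "\<dots> \<le> ennreal ((1 / a) powr (1 / q))"
    using assms by (intro ennreal_leI powr_mono2) (auto simp: field_simps)
  finally show ?thesis
    using True assms by (simp add: powr_minus_divide powr_divide)
qed (simp add: decay_kernel_def)

lemma time_norm_one: "time_norm 1 N = (\<integral>\<^sup>+t\<in>{0<..}. N t \<partial>lborel)"
  by (simp add: time_norm_def)

lemma time_norm_mono:
  assumes "\<And>t. 0 < t \<Longrightarrow> N t \<le> N' t"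
  shows "time_norm \<rho> N \<le> time_norm \<rho> N'"
proof (cases "\<rho> = top")
  case True
  have "{c. AE t in lborel. 0 < t \<longrightarrow> N' t \<le> c} \<subseteq> {c. AE t in lborel. 0 < t \<longrightarrow> N t \<le> c}"
    using assms by (auto elim!: eventually_mono intro: order_trans)
  then show ?thesis
    using True by (simp add: time_norm_def Inf_superset_mono)
next
  case False
  have "(\<integral>\<^sup>+t\<in>{0<..}. enn_rpow (N t) (enn2real \<rho>) \<partial>lborel) \<le> (\<integral>\<^sup>+t\<in>{0<..}. enn_rpow (N' t) (enn2real \<rho>) \<partial>lborel)"
    using assms by (intro nn_integral_mono) (auto intro: mult_right_mono enn_rpow_mono split: split_indicator)
  then show ?thesis
    using False by (simp add: time_norm_def enn_rpow_mono)
qed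

lemma time_norm_eq_luxemburg_norm:
  assumes "1 \<le> q" "N \<in> borel_measurable lborel"
  shows "time_norm (ennreal q) N = luxemburg_norm lborel (\<lambda>_. q) (\<lambda>t. N t * indicator {0<..} t)"
proof -
  have "enn_rpow (N t * indicator {0<..} t) q = enn_rpow (N t) q * indicator {0<..} t" for t
    using assms by (simp split: split_indicator)
  then show ?thesis
    using assms by (simp add: time_norm_def luxemburg_norm_const_exponent)
qed

lemma luxemburg_norm_decay_kernel_mult_le:
  assumes "0 < a" "1 \<le> q" "0 < \<tau> \<longrightarrow> c \<noteq> top"
  shows "luxemburg_norm lborel (\<lambda>_. q) (\<lambda>t. decay_kernel a t \<tau> * c)
    \<le> ennreal (a powr (- 1 / q)) * (c * indicator {0<..} \<tau>)"
proof (cases "0 < \<tau>")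
  case True
  then obtain y where "c = ennreal y" "0 \<le> y"
    using assms(3) by (cases c rule: ennreal_cases) auto
  then have "luxemburg_norm lborel (\<lambda>_. q) (\<lambda>t. decay_kernel a t \<tau> * c)
      \<le> c * luxemburg_norm lborel (\<lambda>_. q) (\<lambda>t. decay_kernel a t \<tau>)"
    using assms luxemburg_norm_cmult[of y "\<lambda>_. q" lborel "\<lambda>t. decay_kernel a t \<tau>"]
    by (simp add: mult.commute)
  also have "\<dots> \<le> c * (ennreal (a powr (- 1 / q)) * indicator {0<..} \<tau>)"
    using assms by (intro mult_left_mono luxemburg_norm_decay_kernel_le) auto
  finally show ?thesis by (simp add: mult_ac)
qed (simp add: decay_kernel_def)

text \<open>\<open>enn2real (inverse \<rho>)\<close> is \<open>1/\<rho>\<close>, read as \<open>0\<close> for \<open>\<rho> = \<infinity>\<close>.\<close>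

lemma time_norm_decay_convolution_le:
  assumes [measurable]: "g \<in> borel_measurable lborel" and "0 < a" "1 \<le> \<rho>"
  shows "time_norm \<rho> (\<lambda>t. \<integral>\<^sup>+\<tau>. decay_kernel a t \<tau> * g \<tau> \<partial>lborel)
    \<le> ennreal (a powr - enn2real (inverse \<rho>)) * (\<integral>\<^sup>+\<tau>\<in>{0<..}. g \<tau> \<partial>lborel)"
    (is "time_norm \<rho> ?N \<le> _ * ?S")
proof (cases \<rho> rule: ennreal_cases)
  case top
  have "?N t \<le> ?S" for t
    using decay_kernel_le_indicator[of a t] \<open>0 < a\<close>
    by (intro nn_integral_mono) (auto simp: mult.commute intro: mult_left_mono)
  then show ?thesis
    using top \<open>0 < a\<close> by (auto simp: time_norm_def intro: Inf_lower)
next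
  case (real q)
  then have "1 \<le> q" using assms(3) by simp
  show ?thesis
  proof (cases "?S = top")
    case False
    have "AE \<tau> in lborel. 0 < \<tau> \<longrightarrow> g \<tau> \<noteq> top"
      using nn_integral_PInf_AE[of "\<lambda>\<tau>. g \<tau> * indicator {0<..} \<tau>" lborel] False
      by (auto elim!: eventually_mono split: split_indicator)
    have "?N t * indicator {0<..} t = ?N t" for t
    proof (cases "0 < t")
      case False
      then have "decay_kernel a t \<tau> = 0" for \<tau>
        by (simp add: decay_kernel_def)
      then show ?thesis by simp
    qed simp
    then have "time_norm \<rho> ?N = luxemburg_norm lborel (\<lambda>_. q) ?N"
      using real \<open>1 \<le> q\<close> by (simp add: time_norm_eq_luxemburg_norm)
    also have "\<dots> \<le> (\<integral>\<^sup>+\<tau>. luxemburg_norm lborel (\<lambda>_. q) (\<lambda>t. decay_kernel a t \<tau> * g \<tau>) \<partial>lborel)"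
      using \<open>1 \<le> q\<close>
      by (intro luxemburg_norm_nn_integral_le[OF lborel.sigma_finite_measure_axioms
          lborel.sigma_finite_measure_axioms]) auto
    also have "\<dots> \<le> (\<integral>\<^sup>+\<tau>. ennreal (a powr (- 1 / q)) * (g \<tau> * indicator {0<..} \<tau>) \<partial>lborel)"
      using \<open>AE \<tau> in lborel. 0 < \<tau> \<longrightarrow> g \<tau> \<noteq> top\<close>
      by (intro nn_integral_mono_AE, eventually_elim)
        (rule luxemburg_norm_decay_kernel_mult_le[OF \<open>0 < a\<close> \<open>1 \<le> q\<close>])
    also have "\<dots> = ennreal (a powr - enn2real (inverse \<rho>)) * ?S"
      using real \<open>1 \<le> q\<close> by (simp add: nn_integral_cmult inverse_ennreal inverse_eq_divide)
    finally show ?thesis .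
  qed (use \<open>0 < a\<close> in \<open>simp add: ennreal_mult_top\<close>)
qed

lemma norm_duhamel_le:
  assumes [measurable]: "(\<lambda>(\<tau>, \<xi>). F \<tau> \<xi>) \<in> borel_measurable (lborel \<Otimes>\<^sub>M lborel)"
    and a: "a \<le> (norm \<xi>)\<^sup>2"
  shows "ennreal (cmod (duhamel F t \<xi>)) \<le> (\<integral>\<^sup>+\<tau>. decay_kernel a t \<tau> * ennreal (cmod (F \<tau> \<xi>)) \<partial>lborel)"
proof -
  define f where "f \<tau> = indicator {0..t} \<tau> *\<^sub>R (complex_of_real (exp (- (t - \<tau>) * (norm \<xi>)\<^sup>2)) * F \<tau> \<xi>)"
    for \<tau>
  have "duhamel F t \<xi> = integral\<^sup>L lborel f"
    unfolding duhamel_def set_lebesgue_integral_def f_def ..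
  then have "ennreal (cmod (duhamel F t \<xi>)) \<le> (\<integral>\<^sup>+\<tau>. ennreal (norm (f \<tau>)) \<partial>lborel)"
    by (cases "integrable lborel f") (simp_all add: integral_norm_bound_ennreal not_integrable_integral_eq)
  also have "\<dots> \<le> (\<integral>\<^sup>+\<tau>. decay_kernel a t \<tau> * ennreal (cmod (F \<tau> \<xi>)) \<partial>lborel)"
  proof (rule nn_integral_mono_AE)
    show "AE \<tau> in lborel. ennreal (norm (f \<tau>)) \<le> decay_kernel a t \<tau> * ennreal (cmod (F \<tau> \<xi>))"
      using AE_lborel_singleton[of 0]
    proof eventually_elim
      case (elim \<tau>)
      show ?case
      proof (cases "0 < \<tau> \<and> \<tau> \<le> t")
        case True
        then have "exp (- (t - \<tau>) * (norm \<xi>)\<^sup>2) \<le> exp (- (t - \<tau>) * a)"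
          using a by (simp add: mult_left_mono_neg)
        then have "norm (f \<tau>) \<le> exp (- (t - \<tau>) * a) * cmod (F \<tau> \<xi>)"
          using True by (auto simp: f_def norm_mult intro: mult_right_mono)
        then show ?thesis
          using True by (simp add: decay_kernel_def ennreal_leI flip: ennreal_mult)
      qed (use elim in \<open>auto simp: f_def\<close>)
    qed
  qed
  finally show ?thesis .
qed

lemma luxemburg_norm_duhamel_le:
  assumes [measurable]: "(\<lambda>(\<tau>, \<xi>). F \<tau> \<xi>) \<in> borel_measurable (lborel \<Otimes>\<^sub>M lborel)"
    "v \<in> borel_measurable lborel" "P \<in> borel_measurable lborel"
    and P: "\<forall>\<xi>. 1 \<le> P \<xi>" and supp: "\<And>\<xi>. v \<xi> \<noteq> 0 \<Longrightarrow> a \<le> (norm \<xi>)\<^sup>2"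
  shows "luxemburg_norm lborel P (\<lambda>\<xi>. ennreal (cmod (of_real (v \<xi>) * duhamel F t \<xi>)))
    \<le> (\<integral>\<^sup>+\<tau>. decay_kernel a t \<tau> * luxemburg_norm lborel P (\<lambda>\<xi>. ennreal (cmod (of_real (v \<xi>) * F \<tau> \<xi>))) \<partial>lborel)"
proof -
  define G where "G \<tau> \<xi> = ennreal (cmod (of_real (v \<xi>) * F \<tau> \<xi>))" for \<tau> \<xi>
  have P0: "\<forall>\<xi>. 0 \<le> P \<xi>" using P by (auto intro: order_trans[OF zero_le_one])
  have "ennreal (cmod (of_real (v \<xi>) * duhamel F t \<xi>)) \<le> (\<integral>\<^sup>+\<tau>. decay_kernel a t \<tau> * G \<tau> \<xi> \<partial>lborel)" for \<xi>
  proof (cases "v \<xi> = 0")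
    case False
    have "ennreal (cmod (of_real (v \<xi>) * duhamel F t \<xi>)) = ennreal \<bar>v \<xi>\<bar> * ennreal (cmod (duhamel F t \<xi>))"
      by (simp add: norm_mult ennreal_mult)
    also have "\<dots> \<le> ennreal \<bar>v \<xi>\<bar> * (\<integral>\<^sup>+\<tau>. decay_kernel a t \<tau> * ennreal (cmod (F \<tau> \<xi>)) \<partial>lborel)"
      using False supp by (intro mult_left_mono norm_duhamel_le) auto
    also have "\<dots> = (\<integral>\<^sup>+\<tau>. decay_kernel a t \<tau> * G \<tau> \<xi> \<partial>lborel)"
      by (simp add: G_def norm_mult ennreal_mult mult_ac flip: nn_integral_cmult)
    finally show ?thesis .
  qed simp
  then have "luxemburg_norm lborel P (\<lambda>\<xi>. ennreal (cmod (of_real (v \<xi>) * duhamel F t \<xi>)))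
      \<le> luxemburg_norm lborel P (\<lambda>\<xi>. \<integral>\<^sup>+\<tau>. decay_kernel a t \<tau> * G \<tau> \<xi> \<partial>lborel)"
    using P0 by (rule luxemburg_norm_mono)
  also have "\<dots> \<le> (\<integral>\<^sup>+\<tau>. luxemburg_norm lborel P (\<lambda>\<xi>. decay_kernel a t \<tau> * G \<tau> \<xi>) \<partial>lborel)"
    using P
    by (intro luxemburg_norm_nn_integral_le[OF lborel.sigma_finite_measure_axioms
          lborel.sigma_finite_measure_axioms]) (auto simp: G_def)
  also have "\<dots> \<le> (\<integral>\<^sup>+\<tau>. decay_kernel a t \<tau> * luxemburg_norm lborel P (G \<tau>) \<partial>lborel)"
    using P0 by (intro nn_integral_mono) (simp add: decay_kernel_def luxemburg_norm_cmult)
  finally show ?thesis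
    unfolding G_def .
qed

lemma time_norm_luxemburg_norm_duhamel_le:
  assumes [measurable]: "(\<lambda>(\<tau>, \<xi>). F \<tau> \<xi>) \<in> borel_measurable (lborel \<Otimes>\<^sub>M lborel)"
    "v \<in> borel_measurable lborel" "P \<in> borel_measurable lborel"
    and P: "\<forall>\<xi>. 1 \<le> P \<xi>" and supp: "\<And>\<xi>. v \<xi> \<noteq> 0 \<Longrightarrow> a \<le> (norm \<xi>)\<^sup>2"
    and "0 < a" "1 \<le> \<rho>" "0 \<le> c"
  shows "time_norm \<rho> (\<lambda>t. luxemburg_norm lborel P (\<lambda>\<xi>. ennreal (cmod (of_real (c * v \<xi>) * duhamel F t \<xi>))))
    \<le> ennreal (c * a powr - enn2real (inverse \<rho>))
      * time_norm 1 (\<lambda>t. luxemburg_norm lborel P (\<lambda>\<xi>. ennreal (cmod (of_real (v \<xi>) * F t \<xi>))))"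
proof -
  define g where "g \<tau> = luxemburg_norm lborel P (\<lambda>\<xi>. ennreal (cmod (of_real (v \<xi>) * F \<tau> \<xi>)))" for \<tau>
  have P0: "\<forall>\<xi>. 0 \<le> P \<xi>" using P by (auto intro: order_trans[OF zero_le_one])
  have [measurable]: "g \<in> borel_measurable lborel"
    unfolding g_def using P0 by (intro borel_measurable_luxemburg_norm[OF lborel.sigma_finite_measure_axioms]) auto
  have "luxemburg_norm lborel P (\<lambda>\<xi>. ennreal (cmod (of_real (c * v \<xi>) * duhamel F t \<xi>)))
      \<le> ennreal c * luxemburg_norm lborel P (\<lambda>\<xi>. ennreal (cmod (of_real (v \<xi>) * duhamel F t \<xi>)))" for t
    using luxemburg_norm_cmult[OF \<open>0 \<le> c\<close> P0] \<open>0 \<le> c\<close> by (simp add: norm_mult ennreal_mult mult.assoc)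
  also have "\<dots> t \<le> ennreal c * (\<integral>\<^sup>+\<tau>. decay_kernel a t \<tau> * g \<tau> \<partial>lborel)" for t
    unfolding g_def using P supp by (intro mult_left_mono luxemburg_norm_duhamel_le) auto
  also have "\<dots> t = (\<integral>\<^sup>+\<tau>. decay_kernel a t \<tau> * (ennreal c * g \<tau>) \<partial>lborel)" for t
    by (simp add: mult_ac flip: nn_integral_cmult)
  finally have "time_norm \<rho> (\<lambda>t. luxemburg_norm lborel P (\<lambda>\<xi>. ennreal (cmod (of_real (c * v \<xi>) * duhamel F t \<xi>))))
      \<le> time_norm \<rho> (\<lambda>t. \<integral>\<^sup>+\<tau>. decay_kernel a t \<tau> * (ennreal c * g \<tau>) \<partial>lborel)"
    by (intro time_norm_mono)
  also have "\<dots> \<le> ennreal (a powr - enn2real (inverse \<rho>)) * (\<integral>\<^sup>+\<tau>\<in>{0<..}. ennreal c * g \<tau> \<partial>lborel)"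
    using assms by (intro time_norm_decay_convolution_le) auto
  also have "(\<integral>\<^sup>+\<tau>\<in>{0<..}. ennreal c * g \<tau> \<partial>lborel) = ennreal c * time_norm 1 g"
    by (simp add: time_norm_one mult.assoc nn_integral_cmult)
  finally show ?thesis
    unfolding g_def using \<open>0 \<le> c\<close> by (simp add: ennreal_mult mult_ac)
qed

lemma borel_measurable_phij:
  assumes "admissible_chi chi"
  shows "phij chi j \<in> borel_measurable lborel"
proof -
  have "chi \<in> Ck 0"
    using assms unfolding admissible_chi_def smooth_fun_def by blast
  then have [measurable]: "chi \<in> borel_measurable lborel"
    by (simp add: borel_measurable_continuous_onI)
  show ?thesis
    unfolding phij_def phi_def by measurable
qed

lemma norm_ge_if_phij_nonzero:
  assumes "admissible_chi chi" "phij chi j \<xi> \<noteq> 0"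
  shows "(3/4 * 2 powr j)\<^sup>2 \<le> (norm \<xi>)\<^sup>2"
proof -
  define \<eta> where "\<eta> = 2 powr (- j) *\<^sub>R \<xi>"
  have chi1: "\<forall>x \<in> ball 0 (3/4). chi x = 1"
    using assms(1) unfolding admissible_chi_def by blast
  have "3/4 \<le> norm \<eta>"
  proof (rule ccontr)
    assume "\<not> 3/4 \<le> norm \<eta>"
    then have "chi \<eta> = 1" "chi ((1/2) *\<^sub>R \<eta>) = 1"
      using chi1 by auto
    then show False
      using assms(2) by (simp add: phij_def phi_def \<eta>_def)
  qed
  then have "3/4 * 2 powr j \<le> norm \<xi>"
    by (simp add: \<eta>_def powr_minus field_simps)
  then show ?thesis
    by (simp add: power_mono)
qed

lemma dyadic_factor_le:
  fixes j :: int and r :: real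
  assumes "0 \<le> r" "r \<le> 1"
  shows "2 powr (j * (2 * r)) * ((3/4 * 2 powr j)\<^sup>2) powr (- r) \<le> 16/9"
proof -
  have sq: "(3/4 * 2 powr j)\<^sup>2 = 9/16 * 2 powr (j * 2)"
    by (simp add: power2_eq_square powr_add[symmetric] algebra_simps)
  have "((3/4 * 2 powr j)\<^sup>2) powr (- r) = (9/16) powr (- r) * 2 powr (- (j * (2 * r)))"
    unfolding sq by (subst powr_mult) (simp_all add: powr_powr mult.assoc)
  then have "2 powr (j * (2 * r)) * ((3/4 * 2 powr j)\<^sup>2) powr (- r) = (9/16) powr (- r)"
    by (simp add: powr_add[symmetric])
  also have "\<dots> = (16/9) powr r"
    by (simp add: powr_minus_divide powr_divide)
  also have "\<dots> \<le> (16/9) powr 1"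
    using assms by (intro powr_mono) auto
  finally show ?thesis by simp
qed

lemma two_over_eq: "two_over \<rho> = 2 * enn2real (inverse \<rho>)"
proof (cases \<rho> rule: ennreal_cases)
  case (real r)
  then show ?thesis
    by (cases "r = 0") (simp_all add: two_over_def inverse_ennreal divide_inverse)
qed (simp add: two_over_def)

lemma enn2real_inverse_le_one: "1 \<le> \<rho> \<Longrightarrow> enn2real (inverse \<rho>) \<le> 1"
  by (cases \<rho> rule: ennreal_cases) (auto simp: inverse_ennreal inverse_le_1_iff)

lemma lux_norm_eq_luxemburg_norm: "lux_norm p g = luxemburg_norm lborel p (\<lambda>x. ennreal (cmod (g x)))"
proof -
  have "(\<integral>\<^sup>+x. ennreal ((cmod (g x) / l) powr p x) \<partial>lborel)
      = modular lborel p (\<lambda>x. ennreal (cmod (g x)) / ennreal l)" if "0 < l" for l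
    using that by (simp add: modular_def divide_ennreal enn_rpow_ennreal)
  then show ?thesis
    unfolding lux_norm_def luxemburg_norm_def by (metis (no_types, lifting))
qed

lemma Lq_norm_eq_luxemburg_norm:
  assumes "0 < q" "g \<in> borel_measurable lborel"
  shows "Lq_norm q g = luxemburg_norm lborel (\<lambda>_. q) (\<lambda>x. ennreal (cmod (g x)))"
  using assms by (simp add: Lq_norm_def luxemburg_norm_const_exponent enn_rpow_ennreal)

lemma borel_measurable_duhamel [measurable]:
  assumes [measurable]: "(\<lambda>(\<tau>, \<xi>). F \<tau> \<xi>) \<in> borel_measurable (lborel \<Otimes>\<^sub>M lborel)"
  shows "duhamel F t \<in> borel_measurable lborel"
  unfolding duhamel_def set_lebesgue_integral_def by measurable

lemma CL_var_duhamel_le: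
  assumes chi: "admissible_chi chi"
    and [measurable]: "p \<in> borel_measurable lborel" "s \<in> borel_measurable lborel"
    and p: "\<forall>\<xi>. 1 \<le> p \<xi>"
    and [measurable]: "(\<lambda>(\<tau>, \<xi>). F \<tau> \<xi>) \<in> borel_measurable (lborel \<Otimes>\<^sub>M lborel)"
    and "1 \<le> \<rho>"
  shows "CL_var chi \<rho> p (\<lambda>\<xi>. s \<xi> + two_over \<rho>) (duhamel F) \<le> ennreal (16/9) * CL_var chi 1 p s F"
proof -
  note [measurable] = borel_measurable_phij[OF chi]
  define r where "r = enn2real (inverse \<rho>)"
  have r: "0 \<le> r" "r \<le> 1"
    using enn2real_inverse_le_one[OF \<open>1 \<le> \<rho>\<close>] by (simp_all add: r_def)
  have "time_norm \<rho> (\<lambda>t. lux_norm p (\<lambda>\<xi>. of_real (2 powr (j * (s \<xi> + two_over \<rho>)) * phij chi j \<xi>) * duhamel F t \<xi>))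
      \<le> ennreal (16/9) * time_norm 1 (\<lambda>t. lux_norm p (\<lambda>\<xi>. of_real (2 powr (j * s \<xi>) * phij chi j \<xi>) * F t \<xi>))"
    for j :: int
  proof -
    define u where "u \<xi> = 2 powr (j * s \<xi>) * phij chi j \<xi>" for \<xi>
    have [measurable]: "u \<in> borel_measurable lborel"
      unfolding u_def by measurable
    have supp: "(3/4 * 2 powr j)\<^sup>2 \<le> (norm \<xi>)\<^sup>2" if "u \<xi> \<noteq> 0" for \<xi>
      using that norm_ge_if_phij_nonzero[OF chi] by (simp add: u_def)
    have weight: "2 powr (j * (s \<xi> + two_over \<rho>)) * phij chi j \<xi> = 2 powr (j * (2 * r)) * u \<xi>" for \<xi>
      by (simp add: u_def r_def two_over_eq distrib_left powr_add)
    have "time_norm \<rho> (\<lambda>t. lux_norm p (\<lambda>\<xi>. of_real (2 powr (j * (s \<xi> + two_over \<rho>)) * phij chi j \<xi>) * duhamel F t \<xi>))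
        \<le> ennreal (2 powr (j * (2 * r)) * ((3/4 * 2 powr j)\<^sup>2) powr - r)
          * time_norm 1 (\<lambda>t. lux_norm p (\<lambda>\<xi>. of_real (u \<xi>) * F t \<xi>))"
      unfolding weight lux_norm_eq_luxemburg_norm r_def
      by (intro time_norm_luxemburg_norm_duhamel_le[OF _ _ _ p supp]) (simp_all add: \<open>1 \<le> \<rho>\<close>)
    also have "\<dots> \<le> ennreal (16/9) * time_norm 1 (\<lambda>t. lux_norm p (\<lambda>\<xi>. of_real (u \<xi>) * F t \<xi>))"
      using r by (intro mult_right_mono ennreal_leI dyadic_factor_le) auto
    finally show ?thesis
      unfolding u_def .
  qed
  then show ?thesis
    unfolding CL_var_def by (subst nn_integral_cmult[symmetric]) (auto intro: nn_integral_mono)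
qed

lemma CL_const_duhamel_le:
  assumes chi: "admissible_chi chi" and "1 \<le> q"
    and [measurable]: "(\<lambda>(\<tau>, \<xi>). F \<tau> \<xi>) \<in> borel_measurable (lborel \<Otimes>\<^sub>M lborel)"
    and "1 \<le> \<rho>"
  shows "CL_const chi \<rho> q (s + two_over \<rho>) (duhamel F) \<le> ennreal (16/9) * CL_const chi 1 q s F"
proof -
  note [measurable] = borel_measurable_phij[OF chi]
  define r where "r = enn2real (inverse \<rho>)"
  have r: "0 \<le> r" "r \<le> 1"
    using enn2real_inverse_le_one[OF \<open>1 \<le> \<rho>\<close>] by (simp_all add: r_def)
  have "ennreal (2 powr (j * (s + two_over \<rho>)))
        * time_norm \<rho> (\<lambda>t. Lq_norm q (\<lambda>\<xi>. of_real (phij chi j \<xi>) * duhamel F t \<xi>))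
      \<le> ennreal (16/9) * (ennreal (2 powr (j * s))
        * time_norm 1 (\<lambda>t. Lq_norm q (\<lambda>\<xi>. of_real (phij chi j \<xi>) * F t \<xi>)))"
    for j :: int
  proof -
    have supp: "(3/4 * 2 powr j)\<^sup>2 \<le> (norm \<xi>)\<^sup>2" if "phij chi j \<xi> \<noteq> 0" for \<xi>
      using that by (rule norm_ge_if_phij_nonzero[OF chi])
    have Lq: "Lq_norm q (\<lambda>\<xi>. of_real (phij chi j \<xi>) * G \<xi>)
        = luxemburg_norm lborel (\<lambda>_. q) (\<lambda>\<xi>. ennreal (cmod (of_real (phij chi j \<xi>) * G \<xi>)))"
      if [measurable]: "G \<in> borel_measurable lborel" for G
      using \<open>1 \<le> q\<close> by (simp add: Lq_norm_eq_luxemburg_norm)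
    have "time_norm \<rho> (\<lambda>t. Lq_norm q (\<lambda>\<xi>. of_real (phij chi j \<xi>) * duhamel F t \<xi>))
        \<le> ennreal ((3/4 * 2 powr j)\<^sup>2 powr - r)
          * time_norm 1 (\<lambda>t. Lq_norm q (\<lambda>\<xi>. of_real (phij chi j \<xi>) * F t \<xi>))"
      using time_norm_luxemburg_norm_duhamel_le[OF _ _ _ _ supp, where F=F and P="\<lambda>_. q" and c=1]
        \<open>1 \<le> q\<close> \<open>1 \<le> \<rho>\<close>
      by (simp add: Lq r_def)
    then have "ennreal (2 powr (j * (s + two_over \<rho>)))
        * time_norm \<rho> (\<lambda>t. Lq_norm q (\<lambda>\<xi>. of_real (phij chi j \<xi>) * duhamel F t \<xi>))
      \<le> ennreal (2 powr (j * s)) * ennreal (2 powr (j * (2 * r)))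
        * (ennreal ((3/4 * 2 powr j)\<^sup>2 powr - r)
          * time_norm 1 (\<lambda>t. Lq_norm q (\<lambda>\<xi>. of_real (phij chi j \<xi>) * F t \<xi>)))"
      by (simp add: r_def two_over_eq distrib_left powr_add mult_left_mono flip: ennreal_mult)
    also have "\<dots> = ennreal (2 powr (j * s)) * ennreal (2 powr (j * (2 * r)) * (3/4 * 2 powr j)\<^sup>2 powr - r)
        * time_norm 1 (\<lambda>t. Lq_norm q (\<lambda>\<xi>. of_real (phij chi j \<xi>) * F t \<xi>))"
      by (simp add: ennreal_mult mult_ac)
    also have "\<dots> \<le> ennreal (2 powr (j * s)) * ennreal (16/9)
        * time_norm 1 (\<lambda>t. Lq_norm q (\<lambda>\<xi>. of_real (phij chi j \<xi>) * F t \<xi>))"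
      using r by (intro mult_right_mono mult_left_mono ennreal_leI dyadic_factor_le) auto
    finally show ?thesis
      by (simp add: mult_ac)
  qed
  then show ?thesis
    unfolding CL_const_def by (subst nn_integral_cmult[symmetric]) (auto intro: nn_integral_mono)
qed

theorem lemma5p2:
  fixes p chi :: "R3 \<Rightarrow> real" and \<rho> :: ennreal
  assumes "admissible_chi chi"
    and "P0_log p"
    and "AE x in lborel. 2 \<le> p x" and "AE x in lborel. p x \<le> 6"
    and "1 \<le> \<rho>"
  shows "\<exists>C::real. C > 0 \<and> (\<forall>F :: real \<Rightarrow> R3 \<Rightarrow> complex.
      (\<lambda>(\<tau>, \<xi>). F \<tau> \<xi>) \<in> borel_measurable (lborel \<Otimes>\<^sub>M lborel)
      \<longrightarrow> CL_var chi 1 p (\<lambda>\<xi>. 1 - 3 / p \<xi>) F < top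
      \<longrightarrow> CL_const chi 1 2 (-1/2) F < top
      \<longrightarrow> Y_norm chi p \<rho> (duhamel F)
          \<le> ennreal C * (CL_var chi 1 p (\<lambda>\<xi>. 1 - 3 / p \<xi>) F + CL_const chi 1 2 (-1/2) F))"
proof (intro exI[of _ 2] conjI allI impI)
  have [measurable]: "p \<in> borel_measurable lborel" and p: "\<forall>x. 1 \<le> p x"
    using assms(2) unfolding P0_log_def by auto
  fix F :: "real \<Rightarrow> R3 \<Rightarrow> complex"
  assume [measurable]: "(\<lambda>(\<tau>, \<xi>). F \<tau> \<xi>) \<in> borel_measurable (lborel \<Otimes>\<^sub>M lborel)"
  define A where "A = CL_var chi 1 p (\<lambda>\<xi>. 1 - 3 / p \<xi>) F"
  define B where "B = CL_const chi 1 2 (-1/2) F"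
  have "CL_var chi \<rho> p (\<lambda>\<xi>. 1 - 3 / p \<xi> + two_over \<rho>) (duhamel F) \<le> ennreal (16/9) * A"
    unfolding A_def using assms(1,5) p by (intro CL_var_duhamel_le) auto
  moreover have "CL_const chi 1 2 (3/2) (duhamel F) \<le> ennreal (16/9) * B"
    using CL_const_duhamel_le[OF assms(1), of 2 F 1 "-1/2"] by (simp add: B_def two_over_def)
  moreover have "CL_const chi top 2 (-1/2) (duhamel F) \<le> ennreal (16/9) * B"
    using CL_const_duhamel_le[OF assms(1), of 2 F top "-1/2"] by (simp add: B_def two_over_def)
  moreover have "ennreal (16/9) * X \<le> ennreal 2 * (A + B)" if "X = A \<or> X = B" for X
    using that by (intro mult_mono ennreal_leI) (auto intro: add_increasing add_increasing2)
  ultimately show "Y_norm chi p \<rho> (duhamel F) \<le> ennreal 2 * (A + B)"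
    unfolding Y_norm_def by (auto intro: order_trans)
qed simp

end
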